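(* For the Thue-Morse word $t$, \[\limsup_{n\to\infty}\frac{PPL_t(n)}{\ln n}=\frac{3}{4\ln 2},\qquad \liminf_{n\to\infty}\frac{PPL_t(n)}{\ln n}=0.\]
   Context: The Thue-Morse word $t=t[1]t[2]\cdots=abbabaabbaababba\cdots$ is the fixed point starting with $a$ of the morphism $a\mapsto abba,\ b\mapsto baab$. A palindrome is a word $p=p[1]\cdots p[n]$ with $p[i]=p[n-i+1]$ for all $i$. $PPL_t(n)$ is the minimal number of nonempty palindromes whose concatenation equals the prefix of $t$ of length $n$. *)

theory Defs
  imports Complex_Main "HOL-Library.Liminf_Limsup" "HOL-Library.Extended_Real"
begin

datatype letter = A | B

fun tm_morph :: "letter \<Rightarrow> letter list" where
  "tm_morph A = [A, B, B, A]"
| "tm_morph B = [B, A, A, B]"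

definition tm_iter :: "nat \<Rightarrow> letter list" where
  "tm_iter k = ((\<lambda>w. concat (map tm_morph w)) ^^ k) [A]"

text \<open>The Thue-Morse word t = t[1] t[2] ..., the fixed point starting with a
  (1-indexed; tm_iter n has length 4^n \<ge> n, and each tm_iter k is a prefix of tm_iter (k+1)).\<close>
definition thue_morse :: "nat \<Rightarrow> letter" where
  "thue_morse i = tm_iter i ! (i - 1)"

definition tm_prefix :: "nat \<Rightarrow> letter list" where
  "tm_prefix n = map thue_morse [1..<n+1]"

definition palindrome :: "'a list \<Rightarrow> bool" where
  "palindrome p \<longleftrightarrow> rev p = p"

definition PPL_t :: "nat \<Rightarrow> nat" where
  "PPL_t n = (LEAST k. \<exists>ps. length ps = k \<and> (\<forall>p\<in>set ps. p \<noteq> [] \<and> palindrome p)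
                          \<and> concat ps = tm_prefix n)"

end

theory Submission
  imports Defs "HOL-Real_Asymp.Real_Asymp"
begin

text \<open>Write \<open>t[a,b)\<close> for the factor of \<open>t\<close> at the 0-based positions \<open>a \<le> i < b\<close>, and let
  \<open>tm_ppl\<close> be the function given by the base-4 recursion below; it equals \<open>PPL_t\<close>.
  It is an upper bound because the Thue-Morse morphism sends letters to palindromes, so it turns
  a palindromic factorization of \<open>t[0,m)\<close> into one of \<open>t[0,4m)\<close> with the same number of
  factors, while appending or deleting a final letter changes the palindromic length by at most one.
  It is a lower bound because \<open>tm_ppl b \<le> tm_ppl a + 1\<close> whenever \<open>t[a,b)\<close> is a palindrome:
  \<open>t\<close> has no odd palindromes of length 5 or more, and an even palindrome is either centred at
  a multiple \<open>4j\<close> of 4, where it is the image of a palindrome centred at \<open>j\<close>, or centred at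
  \<open>4j + 2\<close> with radius at most 6.

  By the recursion, \<open>tm_ppl n + tm_ppl (n + 1)\<close> grows by at most 3 per base-4 digit of \<open>n\<close>,
  so \<open>tm_ppl n \<le> 3 ln n / (4 ln 2) + O(1)\<close>; the indices written \<open>2(21)\<^sup>k\<close> in base 4 attain
  this rate, while \<open>tm_ppl (4\<^sup>k) = 1\<close> makes the liminf vanish.\<close>

section \<open>Palindromic length of words\<close>

lemma palindrome_map_upt_iff:
  "palindrome (map f [a..<b]) \<longleftrightarrow> (\<forall>i<b - a. f (a + i) = f (b - 1 - i))"
  unfolding palindrome_def list_eq_iff_nth_eq by (auto simp: rev_nth)

lemma palindrome_Cons_snocD:
  assumes "palindrome (y # v @ [x])"
  shows "x = y \<and> palindrome v"
proof -
  have "x # rev v @ [y] = y # v @ [x]"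
    using assms unfolding palindrome_def by (simp only: rev.simps rev_append append.simps append_Nil)
  then show ?thesis
    unfolding palindrome_def by (metis append1_eq_conv list.inject)
qed

lemma palindrome_concat_map:
  assumes "\<forall>x\<in>set w. palindrome (h x)" and "palindrome w"
  shows "palindrome (concat (map h w))"
proof -
  have "rev (concat (map h w)) = concat (map (\<lambda>x. rev (h x)) (rev w))"
    by (simp add: rev_concat rev_map o_def)
  also have "\<dots> = concat (map h (rev w))"
    using assms(1) unfolding palindrome_def by (intro arg_cong[where f = concat] map_cong) auto
  also have "\<dots> = concat (map h w)"
    using assms(2) by (simp add: palindrome_def)
  finally show ?thesis
    unfolding palindrome_def .
qed

definition pal_factorization :: "'a list \<Rightarrow> nat \<Rightarrow> bool" where
  "pal_factorization w k \<longleftrightarrow>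
    (\<exists>ps. length ps = k \<and> (\<forall>p\<in>set ps. p \<noteq> [] \<and> palindrome p) \<and> concat ps = w)"

definition pal_length :: "'a list \<Rightarrow> nat" where
  "pal_length w = (LEAST k. pal_factorization w k)"

lemma pal_factorization_letters: "pal_factorization w (length w)"
  unfolding pal_factorization_def
  by (intro exI[of _ "map (\<lambda>x. [x]) w"]) (auto simp: palindrome_def)

lemma pal_length_le: "pal_factorization w k \<Longrightarrow> pal_length w \<le> k"
  unfolding pal_length_def by (rule Least_le)

lemma pal_factorization_pal_length: "pal_factorization w (pal_length w)"
  unfolding pal_length_def using pal_factorization_letters by (rule LeastI)

lemma pal_length_Nil [simp]: "pal_length [] = 0"
  using pal_length_le[OF pal_factorization_letters[of "[]"]] by simp

lemma pal_length_snoc_le: "pal_length (w @ [x]) \<le> pal_length w + 1"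
proof -
  obtain ps where "length ps = pal_length w" "\<forall>p\<in>set ps. p \<noteq> [] \<and> palindrome p" "concat ps = w"
    using pal_factorization_pal_length[of w] unfolding pal_factorization_def by blast
  then have "pal_factorization (w @ [x]) (pal_length w + 1)"
    unfolding pal_factorization_def
    by (intro exI[of _ "ps @ [[x]]"]) (auto simp: palindrome_def)
  then show ?thesis
    by (rule pal_length_le)
qed

lemma pal_length_le_snoc: "pal_length w \<le> pal_length (w @ [x]) + 1"
proof -
  obtain ps where ps: "length ps = pal_length (w @ [x])" "\<forall>p\<in>set ps. p \<noteq> [] \<and> palindrome p"
    "concat ps = w @ [x]"
    using pal_factorization_pal_length[of "w @ [x]"] unfolding pal_factorization_def by blast
  then obtain qs p where qs: "ps = qs @ [p]"
    by (cases ps rule: rev_cases) auto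
  then have "p \<noteq> []" and pal: "palindrome p" and qs_pal: "\<forall>q\<in>set qs. q \<noteq> [] \<and> palindrome q"
    using ps(2) by auto
  then obtain p' where p': "p = p' @ [x]" and w: "w = concat qs @ p'"
    using ps(3) qs by (cases p rule: rev_cases) auto
  show ?thesis
  proof (cases p')
    case Nil
    then have "pal_factorization w (length qs)"
      unfolding pal_factorization_def using qs_pal w by auto
    then show ?thesis
      using pal_length_le ps(1) qs by fastforce
  next
    case (Cons y v)
    then have "palindrome v"
      using pal palindrome_Cons_snocD[of y v x] unfolding p' Cons by simp
    define rs where "rs = qs @ [[y]] @ (if v = [] then [] else [v])"
    have "pal_factorization w (length rs)"
      unfolding pal_factorization_def rs_def using qs_pal w Cons \<open>palindrome v\<close>
      by (intro exI[of _ "qs @ [[y]] @ (if v = [] then [] else [v])"]) (auto simp: palindrome_def)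
    then have "pal_length w \<le> length rs"
      by (rule pal_length_le)
    also have "\<dots> \<le> length ps + 1"
      unfolding rs_def qs by simp
    finally show ?thesis
      using ps(1) by simp
  qed
qed

lemma pal_length_append_le: "pal_length (w @ u) \<le> pal_length w + length u"
proof (induction u rule: rev_induct)
  case (snoc x u)
  then show ?case
    using pal_length_snoc_le[of "w @ u" x] by simp
qed simp

lemma pal_length_le_append: "pal_length w \<le> pal_length (w @ u) + length u"
proof (induction u rule: rev_induct)
  case (snoc x u)
  then show ?case
    using pal_length_le_snoc[of "w @ u" x] by simp
qed simp

lemma pal_length_concat_map_le:
  assumes "\<And>x. h x \<noteq> [] \<and> palindrome (h x)"
  shows "pal_length (concat (map h w)) \<le> pal_length w"
proof -
  obtain ps where ps: "length ps = pal_length w" "\<forall>p\<in>set ps. p \<noteq> [] \<and> palindrome p" "concat ps = w"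
    using pal_factorization_pal_length[of w] unfolding pal_factorization_def by blast
  have "concat (map h p) \<noteq> [] \<and> palindrome (concat (map h p))" if "p \<in> set ps" for p
    using ps(2) that assms palindrome_concat_map[of p h] by (cases p) auto
  moreover have "concat (map h (concat ps)) = concat (map (\<lambda>p. concat (map h p)) ps)"
    by (induction ps) simp_all
  ultimately have "pal_factorization (concat (map h w)) (pal_length w)"
    unfolding pal_factorization_def using ps(1,3)
    by (intro exI[of _ "map (\<lambda>p. concat (map h p)) ps"]) auto
  then show ?thesis
    by (rule pal_length_le)
qed

section \<open>The Thue-Morse word in base 4\<close>

lemma base4_cases:
  fixes n :: nat
  obtains k where "n = 4 * k" | k where "n = 4 * k + 1" | k where "n = 4 * k + 2"
    | k where "n = 4 * k + 3"
proof -
  consider "n = 4 * (n div 4)" | "n = 4 * (n div 4) + 1" | "n = 4 * (n div 4) + 2"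
    | "n = 4 * (n div 4) + 3"
    by linarith
  then show thesis
    using that by metis
qed

fun flip :: "letter \<Rightarrow> letter" where
  "flip A = B"
| "flip B = A"

lemma flip_neq [simp]: "flip x \<noteq> x" "x \<noteq> flip x"
  by (cases x; simp)+

lemma palindrome_tm_morph [simp]: "palindrome (tm_morph x)"
  by (cases x) (simp_all add: palindrome_def)

lemma length_tm_morph [simp]: "length (tm_morph x) = 4"
  by (cases x) simp_all

text \<open>The Thue-Morse word indexed from 0, i.e. \<open>tm n = t[n+1]\<close>, read off digit by digit
  in base 4.\<close>
function tm :: "nat \<Rightarrow> letter" where
  "tm n = (if n = 0 then A else tm_morph (tm (n div 4)) ! (n mod 4))"
  by auto
termination by (relation "measure id") auto

declare tm.simps [simp del]

lemma tm_base4: "r < 4 \<Longrightarrow> tm (4 * m + r) = tm_morph (tm m) ! r"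
  by (cases "4 * m + r = 0") (auto simp: tm.simps[of "4 * m + r"] tm.simps[of 0])

lemma tm_4k: "n = 4 * k \<Longrightarrow> tm n = tm k"
  using tm_base4[of 0 k] by (cases "tm k") auto

lemma tm_4k1: "n = 4 * k + 1 \<Longrightarrow> tm n = flip (tm k)"
  using tm_base4[of 1 k] by (cases "tm k") auto

lemma tm_4k2: "n = 4 * k + 2 \<Longrightarrow> tm n = flip (tm k)"
  using tm_base4[of 2 k] by (cases "tm k") auto

lemma tm_4k3: "n = 4 * k + 3 \<Longrightarrow> tm n = tm k"
  using tm_base4[of 3 k] by (cases "tm k") auto

lemma nth_concat_map_tm_morph:
  "i < length xs \<Longrightarrow> r < 4 \<Longrightarrow> concat (map tm_morph xs) ! (4 * i + r) = tm_morph (xs ! i) ! r"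
proof (induction xs arbitrary: i)
  case (Cons x xs)
  then show ?case by (cases i) (simp_all add: nth_append)
qed simp

lemma length_tm_iter: "length (tm_iter k) = 4 ^ k"
proof (induction k)
  case (Suc k)
  then show ?case by (simp add: tm_iter_def length_concat o_def sum_list_triv)
qed (simp add: tm_iter_def)

lemma nth_tm_iter: "i < 4 ^ k \<Longrightarrow> tm_iter k ! i = tm i"
proof (induction k arbitrary: i)
  case 0
  then show ?case by (simp add: tm_iter_def tm.simps)
next
  case (Suc k)
  have i: "i = 4 * (i div 4) + i mod 4" and lt: "i div 4 < 4 ^ k"
    using Suc.prems by simp_all
  have "tm_iter (Suc k) = concat (map tm_morph (tm_iter k))"
    by (simp add: tm_iter_def)
  then have "tm_iter (Suc k) ! i = tm_morph (tm_iter k ! (i div 4)) ! (i mod 4)"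
    using nth_concat_map_tm_morph[of "i div 4" "tm_iter k" "i mod 4"] lt i
    by (simp add: length_tm_iter)
  also have "\<dots> = tm i"
    using Suc.IH[OF lt] tm_base4[of "i mod 4" "i div 4"] i by simp
  finally show ?case .
qed

lemma thue_morse_Suc: "thue_morse (Suc i) = tm i"
proof -
  have "i < 4 ^ Suc i"
    by (induction i) simp_all
  then show ?thesis
    unfolding thue_morse_def by (simp add: nth_tm_iter)
qed

lemma tm_prefix_eq_map_tm: "tm_prefix n = map tm [0..<n]"
  unfolding tm_prefix_def by (simp add: map_Suc_upt[symmetric] thue_morse_Suc del: upt_Suc)

lemma concat_map_tm_morph_prefix: "concat (map tm_morph (map tm [0..<n])) = map tm [0..<4 * n]"
proof (induction n)
  case (Suc n)
  have "[0..<4 * Suc n] = [0..<4 * n] @ [4 * n, 4 * n + 1, 4 * n + 2, 4 * n + 3]"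
    by (simp add: upt_rec[of "4 * n"] numeral_eq_Suc)
  moreover have "tm_morph (tm n) = [tm (4 * n), tm (4 * n + 1), tm (4 * n + 2), tm (4 * n + 3)]"
    using tm_4k[of "4 * n" n] tm_4k1[of "4 * n + 1" n] tm_4k2[of "4 * n + 2" n] tm_4k3[of "4 * n + 3" n]
    by (cases "tm n") simp_all
  ultimately show ?case
    using Suc by simp
qed simp

section \<open>The recursion \<open>tm_ppl\<close>\<close>

function tm_ppl :: "nat \<Rightarrow> nat" where
  "tm_ppl n =
    (if n = 0 then 0
     else if n mod 4 = 0 then tm_ppl (n div 4)
     else if n mod 4 = 1 then tm_ppl (n div 4) + 1
     else if n mod 4 = 2 then min (tm_ppl (n div 4)) (tm_ppl (n div 4 + 1)) + 2
     else tm_ppl (n div 4 + 1) + 1)"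
  by auto
termination by (relation "measure id") auto

declare tm_ppl.simps [simp del]

lemma tm_ppl_0 [simp]: "tm_ppl 0 = 0"
  by (simp add: tm_ppl.simps)

lemma tm_ppl_4k:
  assumes "n = 4 * k"
  shows "tm_ppl n = tm_ppl k"
proof -
  have "n mod 4 = 0 \<and> n div 4 = k" using assms by presburger
  then show ?thesis by (subst tm_ppl.simps) auto
qed

lemma tm_ppl_4k1:
  assumes "n = 4 * k + 1"
  shows "tm_ppl n = tm_ppl k + 1"
proof -
  have "n mod 4 = 1 \<and> n div 4 = k" using assms by presburger
  then show ?thesis by (subst tm_ppl.simps) auto
qed

lemma tm_ppl_4k2:
  assumes "n = 4 * k + 2"
  shows "tm_ppl n = min (tm_ppl k) (tm_ppl (k + 1)) + 2"
proof -
  have "n mod 4 = 2 \<and> n div 4 = k" using assms by presburger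
  then show ?thesis by (subst tm_ppl.simps) auto
qed

lemma tm_ppl_4k3:
  assumes "n = 4 * k + 3"
  shows "tm_ppl n = tm_ppl (k + 1) + 1"
proof -
  have "n mod 4 = 3 \<and> n div 4 = k" using assms by presburger
  then show ?thesis by (subst tm_ppl.simps) auto
qed

lemma tm_ppl_Suc_bounds: "tm_ppl (n + 1) \<le> tm_ppl n + 1 \<and> tm_ppl n \<le> tm_ppl (n + 1) + 1"
proof (induction n rule: less_induct)
  case (less n)
  show ?case
  proof (cases n rule: base4_cases)
    case (1 k)
    then show ?thesis
      using tm_ppl_4k[of n k] tm_ppl_4k1[of "n + 1" k] by simp
  next
    case (2 k)
    then show ?thesis
      using less.IH[of k] tm_ppl_4k1[of n k] tm_ppl_4k2[of "n + 1" k]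
      by (auto simp: min_def)
  next
    case (3 k)
    then show ?thesis
      using less.IH[of k] tm_ppl_4k2[of n k] tm_ppl_4k3[of "n + 1" k]
      by (auto simp: min_def)
  next
    case (4 k)
    then show ?thesis
      using tm_ppl_4k3[of n k] tm_ppl_4k[of "n + 1" "k + 1"] by simp
  qed
qed

lemma tm_ppl_Suc_le: "tm_ppl (n + 1) \<le> tm_ppl n + 1"
  using tm_ppl_Suc_bounds by blast

lemma tm_ppl_le_Suc: "tm_ppl n \<le> tm_ppl (n + 1) + 1"
  using tm_ppl_Suc_bounds by blast

section \<open>Palindromic factors of the Thue-Morse word\<close>

lemma tm_not_palindrome5: "\<not> (tm p = tm (p + 4) \<and> tm (p + 1) = tm (p + 3))"
proof (cases p rule: base4_cases)
  case (1 k)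
  then show ?thesis
    using tm_4k[of p k] tm_4k1[of "p + 1" k] tm_4k3[of "p + 3" k] tm_4k[of "p + 4" "k + 1"]
    by auto
next
  case (2 k)
  then show ?thesis
    using tm_4k1[of p k] tm_4k2[of "p + 1" k] tm_4k[of "p + 3" "k + 1"] tm_4k1[of "p + 4" "k + 1"]
    by auto
next
  case (3 k)
  then show ?thesis
    using tm_4k2[of p k] tm_4k3[of "p + 1" k] tm_4k1[of "p + 3" "k + 1"] tm_4k2[of "p + 4" "k + 1"]
    by auto
next
  case (4 k)
  then show ?thesis
    using tm_4k3[of p k] tm_4k[of "p + 1" "k + 1"] tm_4k2[of "p + 3" "k + 1"] tm_4k3[of "p + 4" "k + 1"]
    by auto
qed

lemma tm_ppl_palindrome3:
  assumes pal: "tm a = tm (a + 2)"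
  shows "tm_ppl (a + 3) \<le> tm_ppl a + 1"
proof (cases a rule: base4_cases)
  case (1 k)
  then show ?thesis
    using pal tm_4k[of a k] tm_4k2[of "a + 2" k] by simp
next
  case (2 k)
  then show ?thesis
    using pal tm_4k1[of a k] tm_4k3[of "a + 2" k] by simp
next
  case (3 k)
  then show ?thesis
    using tm_ppl_4k2[of a k] tm_ppl_4k1[of "a + 3" "k + 1"] tm_ppl_Suc_le[of k]
    by (simp add: min_def)
next
  case (4 k)
  then show ?thesis
    using tm_ppl_4k3[of a k] tm_ppl_4k2[of "a + 3" "k + 1"] by simp
qed

lemma tm_even_palindrome_center2:
  assumes c: "c = 4 * j + 2" and "r \<le> c" and pal: "\<forall>i<r. tm (c - 1 - i) = tm (c + i)"
  shows "r \<le> 6" and "3 \<le> r \<Longrightarrow> tm (j - 1) = tm (j + 1)"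
proof -
  show outer: "tm (j - 1) = tm (j + 1)" if "3 \<le> r"
  proof -
    have "tm (c - 1 - 2) = tm (c + 2)"
      using pal that by simp
    moreover have "tm (c - 1 - 2) = tm (j - 1)"
      by (rule tm_4k3) (use c \<open>r \<le> c\<close> that in arith)
    moreover have "tm (c + 2) = tm (j + 1)"
      by (rule tm_4k) (use c in arith)
    ultimately show ?thesis by simp
  qed
  show "r \<le> 6"
  proof (rule ccontr)
    assume "\<not> r \<le> 6"
    then have "tm (c - 1 - 6) = tm (c + 6)"
      using pal by (simp del: diff_diff_left)
    moreover have "tm (c - 1 - 6) = tm (j - 2)"
      by (rule tm_4k3) (use c \<open>r \<le> c\<close> \<open>\<not> r \<le> 6\<close> in arith)
    moreover have "tm (c + 6) = tm (j - 2 + 4)"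
      by (rule tm_4k) (use c \<open>r \<le> c\<close> \<open>\<not> r \<le> 6\<close> in arith)
    moreover have "j - 1 = j - 2 + 1" "j + 1 = j - 2 + 3"
      using c \<open>r \<le> c\<close> \<open>\<not> r \<le> 6\<close> by arith+
    ultimately show False
      using outer \<open>\<not> r \<le> 6\<close> tm_not_palindrome5[of "j - 2"] by simp
  qed
qed

lemma tm_ppl_center2_step:
  assumes c: "c = 4 * j + 2" and "0 < r" "r \<le> 6" "r \<le> c"
    and outer: "3 \<le> r \<Longrightarrow> tm_ppl (j + 2) \<le> tm_ppl (j - 1) + 1"
  shows "tm_ppl (c + r) \<le> tm_ppl (c - r) + 1"
proof -
  have j: "3 \<le> r \<Longrightarrow> 1 \<le> j"
    using c \<open>r \<le> c\<close> by arith
  have step: "tm_ppl (j + 1) \<le> tm_ppl j + 1"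
    by (rule tm_ppl_Suc_le)
  consider "r = 1" | "r = 2" | "r = 3" | "r = 4" | "r = 5" | "r = 6"
    using \<open>0 < r\<close> \<open>r \<le> 6\<close> by linarith
  then show ?thesis
  proof cases
    case 1
    have "tm_ppl (c + r) = tm_ppl (j + 1) + 1" "tm_ppl (c - r) = tm_ppl j + 1"
      by (rule tm_ppl_4k3 tm_ppl_4k1; use c 1 in arith)+
    then show ?thesis
      using step by simp
  next
    case 2
    have "tm_ppl (c + r) = tm_ppl (j + 1)" "tm_ppl (c - r) = tm_ppl j"
      by (rule tm_ppl_4k; use c 2 in arith)+
    then show ?thesis
      using step by simp
  next
    case 3
    have "tm_ppl (c + r) = tm_ppl (j + 1) + 1" "tm_ppl (c - r) = tm_ppl (j - 1 + 1) + 1"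
      by (rule tm_ppl_4k1 tm_ppl_4k3; use c j 3 in arith)+
    then show ?thesis
      using step j 3 by simp
  next
    case 4
    have "tm_ppl (c + r) = min (tm_ppl (j + 1)) (tm_ppl (j + 1 + 1)) + 2"
      "tm_ppl (c - r) = min (tm_ppl (j - 1)) (tm_ppl (j - 1 + 1)) + 2"
      by (rule tm_ppl_4k2; use c j 4 in arith)+
    then show ?thesis
      using step outer j 4 by (simp add: min_def)
  next
    case 5
    have "tm_ppl (c + r) = tm_ppl (j + 1 + 1) + 1" "tm_ppl (c - r) = tm_ppl (j - 1) + 1"
      by (rule tm_ppl_4k3 tm_ppl_4k1; use c j 5 in arith)+
    then show ?thesis
      using outer 5 by simp
  next
    case 6
    have "tm_ppl (c + r) = tm_ppl (j + 2)" "tm_ppl (c - r) = tm_ppl (j - 1)"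
      by (rule tm_ppl_4k; use c j 6 in arith)+
    then show ?thesis
      using outer 6 by simp
  qed
qed

lemma tm_ppl_even_palindrome_center2:
  assumes c: "c = 4 * j + 2" and "0 < r" "r \<le> c" and pal: "\<forall>i<r. tm (c - 1 - i) = tm (c + i)"
  shows "tm_ppl (c + r) \<le> tm_ppl (c - r) + 1"
proof (rule tm_ppl_center2_step[OF c \<open>0 < r\<close> _ \<open>r \<le> c\<close>])
  show "r \<le> 6"
    using tm_even_palindrome_center2[OF c \<open>r \<le> c\<close> pal] by blast
  assume "3 \<le> r"
  then have "1 \<le> j"
    using c \<open>r \<le> c\<close> by arith
  then have "tm (j - 1) = tm (j - 1 + 2)" "j - 1 + 3 = j + 2"
    using tm_even_palindrome_center2(2)[OF c \<open>r \<le> c\<close> pal \<open>3 \<le> r\<close>] by simp_all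
  then show "tm_ppl (j + 2) \<le> tm_ppl (j - 1) + 1"
    using tm_ppl_palindrome3[of "j - 1"] by simp
qed

lemma tm_even_palindrome_center0_descent:
  assumes c: "c = 4 * j" and "r \<le> c" and pal: "\<forall>i<r. tm (c - 1 - i) = tm (c + i)"
  shows "\<forall>i<(r + 3) div 4. tm (j - 1 - i) = tm (j + i)"
proof (intro allI impI)
  fix i
  assume "i < (r + 3) div 4"
  then have "4 * i < r"
    by linarith
  then have "tm (c - 1 - 4 * i) = tm (c + 4 * i)"
    using pal by blast
  moreover have "tm (c - 1 - 4 * i) = tm (j - 1 - i)"
    by (rule tm_4k3) (use c \<open>r \<le> c\<close> \<open>4 * i < r\<close> in arith)
  moreover have "tm (c + 4 * i) = tm (j + i)"
    by (rule tm_4k) (use c in arith)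
  ultimately show "tm (j - 1 - i) = tm (j + i)"
    by simp
qed

lemma tm_ppl_center0_step:
  assumes c: "c = 4 * j" and "r \<le> c"
    and desc: "\<And>s. s \<le> (r + 3) div 4 \<Longrightarrow> tm_ppl (j + s) \<le> tm_ppl (j - s) + 1"
  shows "tm_ppl (c + r) \<le> tm_ppl (c - r) + 1"
proof (cases r rule: base4_cases)
  case (1 q)
  have "tm_ppl (c + r) = tm_ppl (j + q)" "tm_ppl (c - r) = tm_ppl (j - q)"
    by (rule tm_ppl_4k; use c 1 in arith)+
  moreover have "(r + 3) div 4 = q"
    using 1 by simp
  ultimately show ?thesis
    using desc[of q] by simp
next
  case (2 q)
  have "tm_ppl (c + r) = tm_ppl (j + q) + 1" "tm_ppl (c - r) = tm_ppl (j - (q + 1) + 1) + 1"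
    by (rule tm_ppl_4k1 tm_ppl_4k3; use c \<open>r \<le> c\<close> 2 in arith)+
  moreover have "j - (q + 1) + 1 = j - q" "(r + 3) div 4 = q + 1"
    using c \<open>r \<le> c\<close> 2 by simp_all
  ultimately show ?thesis
    using desc[of q] by simp
next
  case (3 q)
  have "tm_ppl (c + r) = min (tm_ppl (j + q)) (tm_ppl (j + q + 1)) + 2"
    "tm_ppl (c - r) = min (tm_ppl (j - (q + 1))) (tm_ppl (j - (q + 1) + 1)) + 2"
    by (rule tm_ppl_4k2; use c \<open>r \<le> c\<close> 3 in arith)+
  moreover have "j - (q + 1) + 1 = j - q" "(r + 3) div 4 = q + 1"
    using c \<open>r \<le> c\<close> 3 by simp_all
  ultimately show ?thesis
    using desc[of q] desc[of "q + 1"] by (simp add: min_def)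
next
  case (4 q)
  have "tm_ppl (c + r) = tm_ppl (j + q + 1) + 1" "tm_ppl (c - r) = tm_ppl (j - (q + 1)) + 1"
    by (rule tm_ppl_4k3 tm_ppl_4k1; use c \<open>r \<le> c\<close> 4 in arith)+
  moreover have "(r + 3) div 4 = q + 1"
    using 4 by simp
  ultimately show ?thesis
    using desc[of "q + 1"] by simp
qed

lemma tm_ppl_even_palindrome:
  "0 < r \<Longrightarrow> r \<le> c \<Longrightarrow> \<forall>i<r. tm (c - 1 - i) = tm (c + i) \<Longrightarrow>
    tm_ppl (c + r) \<le> tm_ppl (c - r) + 1"
proof (induction c arbitrary: r rule: less_induct)
  case (less c)
  have middle: "tm (c - 1) = tm c"
    using less.prems(1,3) by (metis add_0_right diff_zero)
  show ?case
  proof (cases c rule: base4_cases)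
    case (1 j)
    have "tm_ppl (j + s) \<le> tm_ppl (j - s) + 1" if "s \<le> (r + 3) div 4" for s
    proof (cases "s = 0")
      case False
      then show ?thesis
        using less.IH[of j s] tm_even_palindrome_center0_descent[of c j r] that less.prems 1
        by fastforce
    qed simp
    then show ?thesis
      using tm_ppl_center0_step[of c j r] less.prems 1 by blast
  next
    case (2 j)
    have "tm (c - 1) = tm j" "tm c = flip (tm j)"
      by (rule tm_4k tm_4k1; use 2 in arith)+
    then show ?thesis
      using middle by simp
  next
    case (3 j)
    then show ?thesis
      using tm_ppl_even_palindrome_center2 less.prems by blast
  next
    case (4 j)
    have "tm (c - 1) = flip (tm j)" "tm c = tm j"
      by (rule tm_4k2 tm_4k3; use 4 in arith)+
    then show ?thesis
      using middle by simp
  qed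
qed

lemma tm_ppl_odd_palindrome:
  assumes len: "b - a = 2 * k + 1" and pal: "\<And>i. i < b - a \<Longrightarrow> tm (a + i) = tm (b - 1 - i)"
  shows "tm_ppl b \<le> tm_ppl a + 1"
proof -
  consider "k = 0" | "k = 1" | "k \<ge> 2"
    by linarith
  then show ?thesis
  proof cases
    case 1
    then have "b = a + 1"
      using len by arith
    then show ?thesis
      using tm_ppl_Suc_le by simp
  next
    case 2
    then have b: "b = a + 3"
      using len by arith
    then have "tm a = tm (a + 2)"
      using pal[of 0] by simp
    then show ?thesis
      using tm_ppl_palindrome3 b by simp
  next
    case 3
    define p where "p = a + k - 2"
    have "k - 2 < b - a" "a + (k - 2) = p" "b - 1 - (k - 2) = p + 4"
      "k - 1 < b - a" "a + (k - 1) = p + 1" "b - 1 - (k - 1) = p + 3"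
      using len 3 unfolding p_def by arith+
    then have "tm p = tm (p + 4)" "tm (p + 1) = tm (p + 3)"
      using pal by metis+
    then show ?thesis
      using tm_not_palindrome5 by blast
  qed
qed

lemma tm_ppl_palindrome_le:
  assumes "a < b" and "palindrome (map tm [a..<b])"
  shows "tm_ppl b \<le> tm_ppl a + 1"
proof -
  have pal: "\<And>i. i < b - a \<Longrightarrow> tm (a + i) = tm (b - 1 - i)"
    using assms(2) by (simp add: palindrome_map_upt_iff)
  obtain k where "b - a = 2 * k \<or> b - a = 2 * k + 1"
    by (metis oddE evenE)
  then show ?thesis
  proof
    assume len: "b - a = 2 * k"
    have "\<forall>i<k. tm (a + k - 1 - i) = tm (a + k + i)"
    proof (intro allI impI)
      fix i
      assume "i < k"
      then have "k - 1 - i < b - a" "a + (k - 1 - i) = a + k - 1 - i" "b - 1 - (k - 1 - i) = a + k + i"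
        using len by arith+
      then show "tm (a + k - 1 - i) = tm (a + k + i)"
        using pal by metis
    qed
    moreover have "0 < k" "a + k + k = b"
      using len \<open>a < b\<close> by simp_all
    ultimately show ?thesis
      using tm_ppl_even_palindrome[of k "a + k"] by simp
  next
    assume "b - a = 2 * k + 1"
    then show ?thesis
      using pal by (rule tm_ppl_odd_palindrome)
  qed
qed

section \<open>\<open>PPL_t\<close> equals \<open>tm_ppl\<close>\<close>

lemma PPL_t_eq_pal_length: "PPL_t n = pal_length (tm_prefix n)"
  unfolding PPL_t_def pal_length_def pal_factorization_def ..

lemma pal_length_tm_prefix_le: "pal_length (map tm [0..<n]) \<le> tm_ppl n"
proof (induction n rule: less_induct)
  case (less n)
  define L where "L m = pal_length (map tm [0..<m])" for m
  have extend: "L m \<le> L j + (m - j)" and shrink: "L j \<le> L m + (m - j)" if "j \<le> m" for j m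
  proof -
    have "map tm [0..<m] = map tm [0..<j] @ map tm [j..<m]"
      using that upt_add_eq_append[of 0 j "m - j"] by simp
    then show "L m \<le> L j + (m - j)" "L j \<le> L m + (m - j)"
      unfolding L_def using pal_length_append_le pal_length_le_append by (metis length_map length_upt)+
  qed
  have mult4: "L (4 * m) \<le> tm_ppl m" if "m < n" for m
  proof -
    have "L (4 * m) \<le> L m"
      unfolding L_def concat_map_tm_morph_prefix[symmetric]
      by (rule pal_length_concat_map_le) (simp flip: length_greater_0_conv)
    also have "\<dots> \<le> tm_ppl m"
      by (cases "m = 0") (simp_all add: L_def less.IH that)
    finally show ?thesis .
  qed
  have "L n \<le> tm_ppl n"
  proof (cases n rule: base4_cases)
    case (1 k)
    then show ?thesis
      using mult4[of k] tm_ppl_4k[of n k] by (cases "n = 0") (simp_all add: L_def)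
  next
    case (2 k)
    then show ?thesis
      using extend[of "4 * k" n] mult4[of k] tm_ppl_4k1[of n k] by simp
  next
    case (3 k)
    then show ?thesis
      using extend[of "4 * k" n] shrink[of n "4 * (k + 1)"] mult4[of k] mult4[of "k + 1"]
        tm_ppl_4k2[of n k]
      by simp
  next
    case (4 k)
    then show ?thesis
      using shrink[of n "4 * (k + 1)"] mult4[of "k + 1"] tm_ppl_4k3[of n k] by simp
  qed
  then show ?case
    unfolding L_def .
qed

lemma tm_ppl_le_pal_factorization:
  "(\<forall>p\<in>set ps. p \<noteq> [] \<and> palindrome p) \<Longrightarrow> concat ps = map tm [0..<n] \<Longrightarrow> tm_ppl n \<le> length ps"
proof (induction ps arbitrary: n rule: rev_induct)
  case (snoc p qs)
  define a where "a = length (concat qs)"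
  have "a \<le> n"
    using arg_cong[OF snoc.prems(2), of length] by (simp add: a_def)
  then have "concat qs @ p = map tm [0..<a] @ map tm [a..<n]"
    using snoc.prems(2) upt_add_eq_append[of 0 a "n - a"] by simp
  then have qs: "concat qs = map tm [0..<a]" and p: "p = map tm [a..<n]"
    unfolding a_def by (simp_all add: append_eq_append_conv)
  have "a < n"
    using p snoc.prems(1) by auto
  then have "tm_ppl n \<le> tm_ppl a + 1"
    using tm_ppl_palindrome_le p snoc.prems(1) by simp
  also have "tm_ppl a \<le> length qs"
    using snoc.IH[OF _ qs] snoc.prems(1) by simp
  finally show ?case
    by simp
qed simp

theorem PPL_t_eq_tm_ppl: "PPL_t n = tm_ppl n"
proof -
  obtain ps where ps: "length ps = pal_length (map tm [0..<n])"
    "\<forall>p\<in>set ps. p \<noteq> [] \<and> palindrome p" "concat ps = map tm [0..<n]"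
    using pal_factorization_pal_length unfolding pal_factorization_def by blast
  then have "tm_ppl n \<le> pal_length (map tm [0..<n])"
    using tm_ppl_le_pal_factorization by metis
  then show ?thesis
    using pal_length_tm_prefix_le[of n] by (simp add: PPL_t_eq_pal_length tm_prefix_eq_map_tm)
qed

section \<open>Asymptotics\<close>

lemma tm_ppl_small: "tm_ppl 1 = 1" "tm_ppl 2 = 2" "tm_ppl 3 = 2" "tm_ppl 4 = 1"
  using tm_ppl_4k1[of 1 0] tm_ppl_4k2[of 2 0] tm_ppl_4k3[of 3 0] tm_ppl_4k[of 4 1] by simp_all

lemma tm_ppl_pair_step:
  assumes "r < 4"
  shows "tm_ppl (4 * k + r) + tm_ppl (4 * k + r + 1) \<le> tm_ppl k + tm_ppl (k + 1) + 3"
proof -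
  have Lip: "tm_ppl (k + 1) \<le> tm_ppl k + 1" "tm_ppl k \<le> tm_ppl (k + 1) + 1"
    using tm_ppl_Suc_bounds by blast+
  consider "r = 0" | "r = 1" | "r = 2" | "r = 3"
    using assms by linarith
  then show ?thesis
  proof cases
    case 1
    then show ?thesis
      using tm_ppl_4k[of "4 * k + r" k] tm_ppl_4k1[of "4 * k + r + 1" k] Lip by simp
  next
    case 2
    then show ?thesis
      using tm_ppl_4k1[of "4 * k + r" k] tm_ppl_4k2[of "4 * k + r + 1" k] Lip by (simp add: min_def)
  next
    case 3
    then show ?thesis
      using tm_ppl_4k2[of "4 * k + r" k] tm_ppl_4k3[of "4 * k + r + 1" k] Lip by (simp add: min_def)
  next
    case 4
    then show ?thesis
      using tm_ppl_4k3[of "4 * k + r" k] tm_ppl_4k[of "4 * k + r + 1" "k + 1"] Lip by simp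
  qed
qed

lemma tm_ppl_pair_le_log: "1 \<le> n \<Longrightarrow> real (tm_ppl n + tm_ppl (n + 1)) \<le> 3 * log 4 n + 4"
proof (induction n rule: less_induct)
  case (less n)
  show ?case
  proof (cases "n < 4")
    case True
    then have "n = 1 \<or> n = 2 \<or> n = 3"
      using less.prems by linarith
    then have "tm_ppl n + tm_ppl (n + 1) \<le> 4"
      using tm_ppl_small by (elim disjE) (simp_all add: numeral_eq_Suc)
    moreover have "0 \<le> log 4 n"
      using less.prems by simp
    ultimately show ?thesis
      by linarith
  next
    case False
    define m where "m = n div 4"
    have "1 \<le> m" "m < n" "4 * m \<le> n"
      using False unfolding m_def by simp_all
    have "log 4 (4 * m) \<le> log 4 n"
      using \<open>1 \<le> m\<close> \<open>4 * m \<le> n\<close> by simp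
    then have "1 + log 4 m \<le> log 4 n"
      using \<open>1 \<le> m\<close> by (simp add: log_mult)
    moreover have "real (tm_ppl m + tm_ppl (m + 1)) \<le> 3 * log 4 m + 4"
      using less.IH \<open>1 \<le> m\<close> \<open>m < n\<close> by blast
    moreover have "tm_ppl n + tm_ppl (n + 1) \<le> tm_ppl m + tm_ppl (m + 1) + 3"
      using tm_ppl_pair_step[of "n mod 4" m] unfolding m_def by simp
    ultimately show ?thesis
      by linarith
  qed
qed

lemma tm_ppl_le_log: "1 \<le> n \<Longrightarrow> real (tm_ppl n) \<le> 3 / (4 * ln 2) * ln n + 5 / 2"
proof -
  assume "1 \<le> n"
  have "2 * real (tm_ppl n) \<le> real (tm_ppl n + tm_ppl (n + 1)) + 1"
    using tm_ppl_le_Suc[of n] by simp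
  also have "\<dots> \<le> 3 * log 4 n + 5"
    using tm_ppl_pair_le_log[OF \<open>1 \<le> n\<close>] by simp
  also have "log 4 n = ln n / (2 * ln 2)"
    by (simp add: log_def ln_realpow[of 2 2, simplified])
  finally show ?thesis
    by (simp add: field_simps)
qed

text \<open>In base 4 the peaks are \<open>2\<close>, \<open>221\<close>, \<open>22121\<close>, ...: every appended digit pair \<open>21\<close>
  raises \<^const>\<open>tm_ppl\<close> by 3 while multiplying the index by 16.\<close>
primrec tm_ppl_peak :: "nat \<Rightarrow> nat" where
  "tm_ppl_peak 0 = 2"
| "tm_ppl_peak (Suc k) = 16 * tm_ppl_peak k + 9"

lemma tm_ppl_at_peak: "tm_ppl (tm_ppl_peak k) = 3 * k + 2 \<and> tm_ppl (tm_ppl_peak k + 1) = 3 * k + 2"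
proof (induction k)
  case 0
  then show ?case
    using tm_ppl_small by simp
next
  case (Suc k)
  define a where "a = tm_ppl_peak k"
  have "tm_ppl (4 * a + 2) = min (tm_ppl a) (tm_ppl (a + 1)) + 2"
    by (rule tm_ppl_4k2) simp
  moreover have "tm_ppl (4 * a + 2 + 1) = tm_ppl (a + 1) + 1"
    by (rule tm_ppl_4k3) simp
  moreover have "tm_ppl (tm_ppl_peak (Suc k)) = tm_ppl (4 * a + 2) + 1"
    by (rule tm_ppl_4k1) (simp add: a_def)
  moreover have "tm_ppl (tm_ppl_peak (Suc k) + 1) = min (tm_ppl (4 * a + 2)) (tm_ppl (4 * a + 2 + 1)) + 2"
    by (rule tm_ppl_4k2) (simp add: a_def)
  ultimately show ?case
    using Suc.IH unfolding a_def by simp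
qed

lemma tm_ppl_peak_bounds: "2 \<le> tm_ppl_peak k" "tm_ppl_peak k < 3 * 16 ^ k"
  by (induction k) simp_all

lemma strict_mono_tm_ppl_peak: "strict_mono tm_ppl_peak"
  by (simp add: strict_mono_Suc_iff)

lemma tm_ppl_pow4: "tm_ppl (4 ^ k) = 1"
proof (induction k)
  case (Suc k)
  have "tm_ppl (4 ^ Suc k) = tm_ppl (4 ^ k)"
    by (rule tm_ppl_4k) simp
  then show ?case
    using Suc.IH by simp
qed (use tm_ppl_small in simp)

lemma limsup_tm_ppl_le: "limsup (\<lambda>n. ereal (tm_ppl n / ln n)) \<le> ereal (3 / (4 * ln 2))"
proof -
  define L :: real where "L = 3 / (4 * ln 2)"
  have "\<forall>\<^sub>F n in sequentially. ereal (tm_ppl n / ln n) \<le> ereal (L + (5 / 2) / ln n)"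
  proof (rule eventually_sequentiallyI[of 2])
    fix n :: nat
    assume "2 \<le> n"
    then have "0 < ln (real n)"
      by simp
    moreover have "real (tm_ppl n) \<le> L * ln n + 5 / 2"
      using tm_ppl_le_log[of n] \<open>2 \<le> n\<close> unfolding L_def by simp
    ultimately show "ereal (tm_ppl n / ln n) \<le> ereal (L + (5 / 2) / ln n)"
      by (simp add: field_simps)
  qed
  then have "limsup (\<lambda>n. ereal (tm_ppl n / ln n)) \<le> limsup (\<lambda>n. ereal (L + (5 / 2) / ln n))"
    by (rule Limsup_mono)
  also have "\<dots> = ereal L"
    by (intro lim_imp_Limsup tendsto_ereal) (simp_all, real_asymp)
  finally show ?thesis
    unfolding L_def .
qed

lemma limsup_tm_ppl_ge: "ereal (3 / (4 * ln 2)) \<le> limsup (\<lambda>n. ereal (tm_ppl n / ln n))"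
proof -
  let ?Y = "\<lambda>n. ereal (tm_ppl n / ln n)"
  have "ereal ((3 * k + 2) / (ln 3 + k * ln 16)) \<le> (?Y \<circ> tm_ppl_peak) k" for k
  proof -
    have "real (tm_ppl_peak k) \<le> real (3 * 16 ^ k)"
      using tm_ppl_peak_bounds(2)[of k] by (intro of_nat_mono) simp
    then have "2 \<le> real (tm_ppl_peak k)" "real (tm_ppl_peak k) \<le> 3 * 16 ^ k"
      using tm_ppl_peak_bounds(1)[of k] by simp_all
    then have "0 < ln (real (tm_ppl_peak k))" "ln (real (tm_ppl_peak k)) \<le> ln (3 * 16 ^ k)"
      by simp_all
    moreover have "ln (3 * 16 ^ k :: real) = ln 3 + k * ln 16"
      by (simp add: ln_mult ln_realpow)
    ultimately show ?thesis
      using tm_ppl_at_peak[of k] by (simp add: frac_le)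
  qed
  then have "limsup (\<lambda>k. ereal ((3 * k + 2) / (ln 3 + k * ln 16))) \<le> limsup (?Y \<circ> tm_ppl_peak)"
    by (intro Limsup_mono always_eventually) blast
  also have "\<dots> \<le> limsup ?Y"
    by (rule limsup_subseq_mono[OF strict_mono_tm_ppl_peak])
  moreover have "limsup (\<lambda>k. ereal ((3 * k + 2) / (ln 3 + k * ln 16))) = ereal (3 / ln 16)"
    by (intro lim_imp_Limsup tendsto_ereal) (simp_all, real_asymp, simp add: divide_inverse)
  moreover have "ln (16 :: real) = 4 * ln 2"
    using ln_realpow[of 2 4] by simp
  ultimately show ?thesis
    by simp
qed

lemma liminf_tm_ppl: "liminf (\<lambda>n. ereal (tm_ppl n / ln n)) = 0"
proof (rule antisym)
  let ?Y = "\<lambda>n. ereal (tm_ppl n / ln n)"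
  have "liminf ?Y \<le> liminf (?Y \<circ> (\<lambda>k. 4 ^ k))"
    by (rule liminf_subseq_mono) (simp add: strict_mono_Suc_iff)
  also have "(?Y \<circ> (\<lambda>k. 4 ^ k)) = (\<lambda>k. ereal (1 / (k * ln 4)))"
    by (simp add: o_def tm_ppl_pow4 ln_realpow)
  also have "liminf \<dots> = 0"
    unfolding zero_ereal_def by (intro lim_imp_Liminf tendsto_ereal) (simp_all, real_asymp)
  finally show "liminf ?Y \<le> 0" .
  have "0 \<le> ln (real n)" for n
    by (cases "n = 0") simp_all
  then show "0 \<le> liminf ?Y"
    by (intro Liminf_bounded always_eventually allI) simp
qed

theorem corollary16:
  shows "limsup (\<lambda>n. ereal (real (PPL_t n) / ln (real n))) = ereal (3 / (4 * ln 2))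
    \<and> liminf (\<lambda>n. ereal (real (PPL_t n) / ln (real n))) = 0"
proof -
  have "(\<lambda>n. ereal (real (PPL_t n) / ln (real n))) = (\<lambda>n. ereal (tm_ppl n / ln n))"
    by (simp add: PPL_t_eq_tm_ppl)
  then show ?thesis
    using limsup_tm_ppl_le limsup_tm_ppl_ge liminf_tm_ppl by (simp add: antisym)
qed

end
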